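(* Let $k\ge3$, let $G$ be a graph and $L$ a $k$-list assignment for $G$. Let $B$ be a bug in $G$ whose root $r$ has $d_G(r)\le 1$. Then $B$ is safe in $G$ if at least one of the following holds: $|V(B)|\ge2$; there is no edge between $V(B)$ and $V(G)\setminus V(B)$; $|V(G)|\not\equiv 0\pmod k$.
   Context: $V_{3^+}(G)$ is the set of vertices of degree at least $3$ in $G$. A bug in $G$ is an induced connected subgraph $B$ together with a vertex $r\in V(B)$, its root, such that $V(B)\cap V_{3^+}(G)\subseteq\{r\}$. A $k$-list assignment $L$ assigns to each vertex $v$ a set $L(v)$ of exactly $k$ colors; an $L$-coloring is a proper vertex coloring $f$ with $f(v)\in L(v)$. For an integer $n$ and $k\ge1$, $n\bmod^* k$ is the unique $m\in\{1,\dots,k\}$ with $n\equiv m\pmod k$. If $|V(G)|=n\ge 1$, an $L$-coloring $f$ of $G$ is strongly equitable (SE) if every color class has at most $\lceil n/k\rceil$ vertices and the number of colors whose class has exactly $\lceil n/k\rceil$ vertices (the full classes) is at most $n\bmod^* k$; the empty graph is regarded as SE $L$-colorable. A subgraph $S\subseteq G$ is safe in $G$ if every SE $L$-coloring of $G-V(S)$ (with the restriction of $L$) can be extended to an SE $L$-coloring of $G$. *)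

theory Defs
  imports Main
begin

definition graph :: "'a set \<Rightarrow> ('a \<Rightarrow> 'a \<Rightarrow> bool) \<Rightarrow> bool" where
  "graph V E \<longleftrightarrow> finite V \<and> (\<forall>x y. E x y \<longrightarrow> x \<in> V \<and> y \<in> V)
     \<and> (\<forall>x y. E x y \<longrightarrow> E y x) \<and> (\<forall>x. \<not> E x x)"

definition deg :: "'a set \<Rightarrow> ('a \<Rightarrow> 'a \<Rightarrow> bool) \<Rightarrow> 'a \<Rightarrow> nat" where
  "deg V E v = card {u \<in> V. E v u}"

definition V3plus :: "'a set \<Rightarrow> ('a \<Rightarrow> 'a \<Rightarrow> bool) \<Rightarrow> 'a set" where
  "V3plus V E = {v \<in> V. deg V E v \<ge> 3}"

definition induced_connected :: "'a set \<Rightarrow> ('a \<Rightarrow> 'a \<Rightarrow> bool) \<Rightarrow> bool" where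
  "induced_connected S E \<longleftrightarrow> S \<noteq> {} \<and>
     (\<forall>x\<in>S. \<forall>y\<in>S. (x, y) \<in> {(a, b). a \<in> S \<and> b \<in> S \<and> E a b}\<^sup>*)"

definition bug :: "'a set \<Rightarrow> ('a \<Rightarrow> 'a \<Rightarrow> bool) \<Rightarrow> 'a set \<Rightarrow> 'a \<Rightarrow> bool" where
  "bug V E S r \<longleftrightarrow> S \<subseteq> V \<and> r \<in> S \<and> induced_connected S E \<and> S \<inter> V3plus V E \<subseteq> {r}"

definition list_assignment :: "nat \<Rightarrow> 'a set \<Rightarrow> ('a \<Rightarrow> 'c set) \<Rightarrow> bool" where
  "list_assignment k V L \<longleftrightarrow> (\<forall>v\<in>V. finite (L v) \<and> card (L v) = k)"

definition L_coloring :: "'a set \<Rightarrow> ('a \<Rightarrow> 'a \<Rightarrow> bool) \<Rightarrow> ('a \<Rightarrow> 'c set) \<Rightarrow> ('a \<Rightarrow> 'c) \<Rightarrow> bool" where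
  "L_coloring V E L f \<longleftrightarrow> (\<forall>v\<in>V. f v \<in> L v) \<and> (\<forall>x\<in>V. \<forall>y\<in>V. E x y \<longrightarrow> f x \<noteq> f y)"

text \<open>ceil(n/k) and n mod* k (the unique m in {1..k} with n = m mod k).\<close>
definition ceil_div :: "nat \<Rightarrow> nat \<Rightarrow> nat" where
  "ceil_div n k = (n + k - 1) div k"

definition mod_star :: "nat \<Rightarrow> nat \<Rightarrow> nat" where
  "mod_star n k = ((n + k - 1) mod k) + 1"

definition color_class :: "'a set \<Rightarrow> ('a \<Rightarrow> 'c) \<Rightarrow> 'c \<Rightarrow> 'a set" where
  "color_class V f c = {v \<in> V. f v = c}"

definition SE_coloring :: "nat \<Rightarrow> 'a set \<Rightarrow> ('a \<Rightarrow> 'a \<Rightarrow> bool) \<Rightarrow> ('a \<Rightarrow> 'c set) \<Rightarrow> ('a \<Rightarrow> 'c) \<Rightarrow> bool" where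
  "SE_coloring k V E L f \<longleftrightarrow> L_coloring V E L f \<and>
     (V \<noteq> {} \<longrightarrow>
       (\<forall>c. card (color_class V f c) \<le> ceil_div (card V) k) \<and>
       card {c. card (color_class V f c) = ceil_div (card V) k} \<le> mod_star (card V) k)"

definition safe :: "nat \<Rightarrow> 'a set \<Rightarrow> ('a \<Rightarrow> 'a \<Rightarrow> bool) \<Rightarrow> ('a \<Rightarrow> 'c set) \<Rightarrow> 'a set \<Rightarrow> bool" where
  "safe k V E L S \<longleftrightarrow> (\<forall>f. SE_coloring k (V - S) E L f \<longrightarrow>
      (\<exists>g. SE_coloring k V E L g \<and> (\<forall>v \<in> V - S. g v = f v)))"

end

theory Submission
  imports Defs
begin

text \<open>
  Colour the bug one vertex at a time, peeling off the root: r has at most one neighbour s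
  in B, and B - r is again a bug, rooted at s, with d(s) \<le> 1 in G - r.  A vertex v added to
  an SE colouring of U keeps it SE if its colour avoids the colours of its neighbours and,
  unless k divides |U|, the at most |U| mod k full colours.  For d(v) \<le> 1 this leaves a free
  colour in L(v) except when |U| \<equiv> -1 (mod k).  That case is absorbed by strengthening the
  induction: whenever |V| \<equiv> -1 (mod k), the full colours together with the colour of the
  root are fewer than k.  For a single-vertex bug the hypothesis rules the case out, and when
  B - r is a single vertex s with k dividing |V - r|, r is coloured before s.
\<close>

lemma mod_star_eq: "k \<ge> 1 \<Longrightarrow> mod_star n k = (if n mod k = 0 then k else n mod k)"
proof (cases n)
  case (Suc m)
  assume "k \<ge> 1"
  then have "(n + k - 1) mod k = m mod k" using Suc by simp
  then show ?thesis using Suc \<open>k \<ge> 1\<close> by (simp add: mod_star_def mod_Suc)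
qed (simp add: mod_star_def)

lemma ceil_div_eq: "k \<ge> 1 \<Longrightarrow> ceil_div n k = n div k + (if n mod k = 0 then 0 else 1)"
proof (cases n)
  case (Suc m)
  assume "k \<ge> 1"
  then have "(n + k - 1) div k = m div k + 1" using Suc by (simp add: div_add_self2)
  then show ?thesis using Suc \<open>k \<ge> 1\<close> by (simp add: ceil_div_def mod_Suc div_Suc)
qed (simp add: ceil_div_def)

lemma ceil_div_Suc:
  "k \<ge> 1 \<Longrightarrow> ceil_div (Suc n) k = ceil_div n k + (if n mod k = 0 then 1 else 0)"
  by (simp add: ceil_div_eq mod_Suc div_Suc)

lemma mod_star_Suc:
  "k \<ge> 1 \<Longrightarrow> mod_star (Suc n) k = (if n mod k = 0 then 1 else mod_star n k + 1)"
  by (simp add: mod_star_eq mod_Suc)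

definition full_colors :: "nat \<Rightarrow> 'a set \<Rightarrow> ('a \<Rightarrow> 'c) \<Rightarrow> 'c set" where
  "full_colors k U f = {c. card (color_class U f c) = ceil_div (card U) k}"

lemma card_color_class_le_ceil_div:
  "SE_coloring k U E L f \<Longrightarrow> card (color_class U f c) \<le> ceil_div (card U) k"
  by (cases "U = {}") (auto simp: SE_coloring_def color_class_def)

lemma card_full_colors_le_mod:
  assumes "SE_coloring k U E L f" "card U mod k \<noteq> 0" "k \<ge> 1"
  shows "card (full_colors k U f) \<le> card U mod k"
proof -
  have "U \<noteq> {}" using assms(2) by auto
  then show ?thesis
    using assms by (simp add: SE_coloring_def full_colors_def mod_star_eq)
qed

lemma finite_full_colors:
  assumes "finite U" "card U mod k \<noteq> 0" "k \<ge> 1"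
  shows "finite (full_colors k U f)"
proof (rule finite_subset)
  have "ceil_div (card U) k \<ge> 1" using assms(2,3) by (simp add: ceil_div_eq)
  then have "color_class U f c \<noteq> {}" if "c \<in> full_colors k U f" for c
    using that by (auto simp: full_colors_def)
  then show "full_colors k U f \<subseteq> f ` U"
    by (auto simp: color_class_def)
qed (use assms(1) in simp)

lemma card_color_class_upd:
  assumes "finite U" "v \<notin> U"
  shows "card (color_class (insert v U) (f(v := c)) c') =
    card (color_class U f c') + (if c' = c then 1 else 0)"
proof -
  have "color_class (insert v U) (f(v := c)) c' =
      (if c' = c then insert v (color_class U f c') else color_class U f c')"
    using assms(2) by (auto simp: color_class_def)
  then show ?thesis
    using assms by (simp add: color_class_def)
qed

lemma L_coloring_upd:
  assumes "L_coloring U E L f" "symp E" "irreflp E" "c \<in> L v" "\<forall>u\<in>U. E v u \<longrightarrow> f u \<noteq> c"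
  shows "L_coloring (insert v U) E L (f(v := c))"
  using assms unfolding L_coloring_def symp_def irreflp_def by (metis fun_upd_apply insert_iff)

text \<open>Full classes block only when k does not divide |U|; otherwise \<lceil>|U|/k\<rceil> grows with the new vertex.\<close>
definition forbidden_colors ::
    "nat \<Rightarrow> 'a set \<Rightarrow> ('a \<Rightarrow> 'a \<Rightarrow> bool) \<Rightarrow> ('a \<Rightarrow> 'c) \<Rightarrow> 'a \<Rightarrow> 'c set" where
  "forbidden_colors k U E f v =
     (if card U mod k = 0 then {} else full_colors k U f) \<union> f ` {u \<in> U. E v u}"

lemma finite_forbidden_colors:
  "finite U \<Longrightarrow> k \<ge> 1 \<Longrightarrow> finite (forbidden_colors k U E f v)"
  by (simp add: forbidden_colors_def finite_full_colors)

lemma card_forbidden_colors_le: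
  assumes "SE_coloring k U E L f" "finite U" "k \<ge> 1"
  shows "card (forbidden_colors k U E f v) \<le> card U mod k + deg U E v"
proof -
  have "card (forbidden_colors k U E f v) \<le>
      card (if card U mod k = 0 then {} else full_colors k U f) + card (f ` {u \<in> U. E v u})"
    unfolding forbidden_colors_def by (rule card_Un_le)
  also have "card (if card U mod k = 0 then {} else full_colors k U f) \<le> card U mod k"
    using card_full_colors_le_mod[OF assms(1) _ assms(3)] by simp
  also have "card (f ` {u \<in> U. E v u}) \<le> deg U E v"
    unfolding deg_def by (rule card_image_le) (use assms(2) in simp)
  finally show ?thesis by simp
qed

lemma card_forbidden_colors_less:
  assumes "SE_coloring k U E L f" "finite U" "k \<ge> 2"
    and "card U mod k \<noteq> k - 1" "deg U E v \<le> 1"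
  shows "card (forbidden_colors k U E f v) < k"
proof -
  have "card U mod k < k - 1" using assms(3,4) mod_less_divisor[of k "card U"] by linarith
  moreover have "card (forbidden_colors k U E f v) \<le> card U mod k + deg U E v"
    using card_forbidden_colors_le[OF assms(1,2)] assms(3) by simp
  ultimately show ?thesis using assms(5) by linarith
qed

lemma card_color_class_upd_le:
  assumes "SE_coloring k U E L f" "finite U" "v \<notin> U" "k \<ge> 1"
    and "card U mod k \<noteq> 0 \<longrightarrow> c \<notin> full_colors k U f"
  shows "card (color_class (insert v U) (f(v := c)) c') \<le> ceil_div (card (insert v U)) k"
proof -
  have "card (color_class U f c') \<le> ceil_div (card U) k"
    using assms(1) by (rule card_color_class_le_ceil_div)
  moreover have "card (color_class U f c) \<noteq> ceil_div (card U) k" if "card U mod k \<noteq> 0"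
    using assms(5) that by (simp add: full_colors_def)
  ultimately show ?thesis
    using assms(2-4) by (auto simp: card_color_class_upd ceil_div_Suc)
qed

lemma full_colors_upd_subset:
  assumes "SE_coloring k U E L f" "finite U" "v \<notin> U" "k \<ge> 1"
  shows "full_colors k (insert v U) (f(v := c)) \<subseteq>
    (if card U mod k = 0 then {} else full_colors k U f) \<union> {c}"
proof
  fix c' assume full: "c' \<in> full_colors k (insert v U) (f(v := c))"
  show "c' \<in> (if card U mod k = 0 then {} else full_colors k U f) \<union> {c}"
  proof (cases "c' = c")
    case False
    have "card (color_class U f c') \<le> ceil_div (card U) k"
      using assms(1) by (rule card_color_class_le_ceil_div)
    then show ?thesis
      using full False assms(2-4)
      by (auto simp: full_colors_def card_color_class_upd ceil_div_Suc split: if_splits)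
  qed simp
qed

lemma SE_coloring_upd:
  assumes "k \<ge> 1" "finite U" "v \<notin> U" "SE_coloring k U E L f" "symp E" "irreflp E"
    and "c \<in> L v" "c \<notin> forbidden_colors k U E f v"
  shows "SE_coloring k (insert v U) E L (f(v := c))"
    and "card (full_colors k (insert v U) (f(v := c)) \<union> {c}) \<le> mod_star (card (insert v U)) k"
proof -
  let ?W = "insert v U" and ?g = "f(v := c)"
  let ?F = "if card U mod k = 0 then {} else full_colors k U f"
  have not_full: "card U mod k \<noteq> 0 \<longrightarrow> c \<notin> full_colors k U f"
    using assms(8) by (auto simp: forbidden_colors_def)
  have "card (?F \<union> {c}) \<le> card ?F + 1"
    using card_Un_le[of ?F "{c}"] by simp
  also have "card ?F \<le> (if card U mod k = 0 then 0 else mod_star (card U) k)"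
    using card_full_colors_le_mod[OF assms(4) _ assms(1)] assms(1) by (simp add: mod_star_eq)
  also have "\<dots> + 1 = mod_star (card ?W) k"
    using assms(1-3) by (simp add: mod_star_Suc)
  finally have "card (?F \<union> {c}) \<le> mod_star (card ?W) k" by simp
  moreover have sub: "full_colors k ?W ?g \<union> {c} \<subseteq> ?F \<union> {c}"
    using full_colors_upd_subset[OF assms(4,2,3,1), of c] by blast
  moreover have fin: "finite (?F \<union> {c})"
    using finite_full_colors[OF assms(2) _ assms(1)] by auto
  ultimately show full_bound: "card (full_colors k ?W ?g \<union> {c}) \<le> mod_star (card ?W) k"
    by (meson card_mono le_trans)
  have "L_coloring U E L f" "\<forall>u\<in>U. E v u \<longrightarrow> f u \<noteq> c"
    using assms(4,8) by (auto simp: SE_coloring_def forbidden_colors_def)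
  then have "L_coloring ?W E L ?g"
    using assms(5-7) by (intro L_coloring_upd)
  moreover have "card (full_colors k ?W ?g) \<le> card (full_colors k ?W ?g \<union> {c})"
    by (rule card_mono[OF finite_subset[OF sub fin]]) blast
  with full_bound have "card (full_colors k ?W ?g) \<le> mod_star (card ?W) k"
    by linarith
  ultimately show "SE_coloring k ?W E L ?g"
    using card_color_class_upd_le[OF assms(4,2,3,1) not_full]
    by (simp add: SE_coloring_def full_colors_def)
qed

text \<open>The invariant carried through the induction on the bug: it guarantees a free colour
  for a pendant neighbour of the root added next.\<close>
definition root_slack :: "nat \<Rightarrow> 'a set \<Rightarrow> ('a \<Rightarrow> 'c) \<Rightarrow> 'a \<Rightarrow> bool" where
  "root_slack k V g r \<longleftrightarrow> (card V mod k = k - 1 \<longrightarrow> card (full_colors k V g \<union> {g r}) < k)"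

lemma SE_extend_vertex:
  assumes "k \<ge> 2" "finite V" "symp E" "irreflp E" "list_assignment k V L" "r \<in> V"
    and "SE_coloring k (V - {r}) E L f" "card (forbidden_colors k (V - {r}) E f r) < k"
  obtains g where "SE_coloring k V E L g" "\<forall>v\<in>V - {r}. g v = f v" "root_slack k V g r"
proof -
  let ?F = "forbidden_colors k (V - {r}) E f r"
  have "card (L r) = k" using assms(5,6) by (simp add: list_assignment_def)
  moreover have "card (L r) - card ?F \<le> card (L r - ?F)"
    using assms(1,2) by (intro diff_card_le_card_Diff finite_forbidden_colors) auto
  ultimately have "card (L r - ?F) > 0" using assms(8) by linarith
  then have "L r - ?F \<noteq> {}" by (simp add: card_gt_0_iff)
  then obtain c where c: "c \<in> L r" "c \<notin> ?F" by blast
  have V: "insert r (V - {r}) = V" using assms(6) by blast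
  have "SE_coloring k V E L (f(r := c))"
    and full: "card (full_colors k V (f(r := c)) \<union> {c}) \<le> mod_star (card V) k"
    using SE_coloring_upd[of k "V - {r}" r, OF _ _ _ assms(7) assms(3,4) c] assms(1,2) V by simp_all
  moreover have "root_slack k V (f(r := c)) r"
    using full assms(1) by (auto simp: root_slack_def mod_star_eq)
  ultimately show ?thesis using that by simp
qed

lemma deg_mono: "finite V \<Longrightarrow> U \<subseteq> V \<Longrightarrow> deg U E v \<le> deg V E v"
  unfolding deg_def by (rule card_mono) auto

lemma induced_connected_neighbor:
  assumes "induced_connected S E" "r \<in> S" "x \<in> S" "x \<noteq> r"
  obtains s where "s \<in> S" "E r s"
proof -
  have "(r, x) \<in> {(a, b). a \<in> S \<and> b \<in> S \<and> E a b}\<^sup>*"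
    using assms unfolding induced_connected_def by blast
  then show ?thesis
    using assms(4) that by (cases rule: converse_rtranclE) auto
qed

lemma induced_connected_Diff_leaf:
  assumes conn: "induced_connected S E" and "r \<in> S" "s \<in> S" "s \<noteq> r" "symp E"
    and leaf: "\<And>u. u \<in> S \<Longrightarrow> E r u \<Longrightarrow> u = s"
  shows "induced_connected (S - {r}) E"
proof -
  let ?R = "{(a, b). a \<in> S \<and> b \<in> S \<and> E a b}"
  let ?R' = "{(a, b). a \<in> S - {r} \<and> b \<in> S - {r} \<and> E a b}"
  have walk: "(y \<noteq> r \<and> (x, y) \<in> ?R'\<^sup>*) \<or> (y = r \<and> (x, s) \<in> ?R'\<^sup>*)"
    if "(x, y) \<in> ?R\<^sup>*" and x: "x \<in> S - {r}" for x y
    using that(1)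
  proof (induction rule: rtrancl_induct)
    case (step y z)
    then have yz: "y \<in> S" "z \<in> S" "E y z" by auto
    from step.IH show ?case
    proof (elim disjE conjE)
      assume "y \<noteq> r" "(x, y) \<in> ?R'\<^sup>*"
      moreover have "z = r \<Longrightarrow> y = s"
        using leaf yz \<open>symp E\<close> by (auto dest: sympD)
      ultimately show ?case
        using yz by (cases "z = r") (auto intro: rtrancl_into_rtrancl)
    next
      assume "y = r" "(x, s) \<in> ?R'\<^sup>*"
      then show ?case using leaf yz \<open>s \<noteq> r\<close> by auto
    qed
  qed (use x in simp)
  show ?thesis unfolding induced_connected_def
  proof (intro conjI ballI)
    show "S - {r} \<noteq> {}" using assms(3,4) by blast
  next
    fix x y assume "x \<in> S - {r}" "y \<in> S - {r}"
    moreover from this have "(x, y) \<in> ?R\<^sup>*" using conn unfolding induced_connected_def by blast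
    ultimately show "(x, y) \<in> ?R'\<^sup>*" using walk by blast
  qed
qed

lemma V3plus_Diff_subset:
  assumes "finite V" shows "V3plus (V - X) E \<subseteq> V3plus V E"
proof -
  have "deg (V - X) E v \<le> deg V E v" for v using assms by (rule deg_mono) blast
  then show ?thesis unfolding V3plus_def using le_trans by blast
qed

lemma bug_Diff_leaf_root:
  assumes "finite V" "symp E" "irreflp E" "bug V E S r" "deg V E r \<le> 1" "card S \<ge> 2"
  obtains s where "s \<in> S" "s \<noteq> r" "{u \<in> V. E r u} = {s}" "deg V E s \<le> 2"
    "bug (V - {r}) E (S - {r}) s" "deg (V - {r}) E s \<le> 1"
proof -
  have SV: "S \<subseteq> V" and "r \<in> S" and conn: "induced_connected S E"
    and V3: "S \<inter> V3plus V E \<subseteq> {r}"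
    using assms(4) by (auto simp: bug_def)
  have "\<not> S \<subseteq> {r}"
    using card_mono[of "{r}" S] assms(6) by auto
  then obtain x where "x \<in> S" "x \<noteq> r" by blast
  then obtain s where s: "s \<in> S" "E r s"
    using induced_connected_neighbor[OF conn \<open>r \<in> S\<close>] by blast
  have "s \<noteq> r" using s(2) assms(3) by (auto dest: irreflpD)
  have "s \<in> {u \<in> V. E r u}" using s SV by blast
  moreover have "card {u \<in> V. E r u} \<le> 1" using assms(5) by (simp add: deg_def)
  ultimately have nbrs: "{u \<in> V. E r u} = {s}"
    using card_le_Suc0_iff_eq[of "{u \<in> V. E r u}"] assms(1) by auto
  have "s \<notin> V3plus V E" using V3 s(1) \<open>s \<noteq> r\<close> by blast
  then have deg_s: "deg V E s \<le> 2" using s(1) SV by (auto simp: V3plus_def)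
  moreover have "{u \<in> V - {r}. E s u} = {u \<in> V. E s u} - {r}" by blast
  moreover have "r \<in> {u \<in> V. E s u}"
    using s SV \<open>r \<in> S\<close> assms(2) by (auto dest: sympD)
  ultimately have "deg (V - {r}) E s \<le> 1"
    by (simp add: deg_def card_Diff_singleton)
  moreover have "bug (V - {r}) E (S - {r}) s"
    unfolding bug_def
  proof (intro conjI)
    show "S - {r} \<subseteq> V - {r}" "s \<in> S - {r}" using SV s(1) \<open>s \<noteq> r\<close> by auto
    show "induced_connected (S - {r}) E"
      using nbrs SV by (intro induced_connected_Diff_leaf[OF conn \<open>r \<in> S\<close> s(1) \<open>s \<noteq> r\<close> assms(2)]) auto
    show "(S - {r}) \<inter> V3plus (V - {r}) E \<subseteq> {s}"
      using V3 V3plus_Diff_subset[OF assms(1), of "{r}" E] by blast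
  qed
  ultimately show ?thesis
    using that s(1) \<open>s \<noteq> r\<close> nbrs deg_s by blast
qed

lemma list_assignment_subset: "list_assignment k V L \<Longrightarrow> U \<subseteq> V \<Longrightarrow> list_assignment k U L"
  unfolding list_assignment_def by blast

lemma card_Diff_singleton_mod:
  assumes "finite V" "r \<in> V" "k \<ge> 2"
  shows "card (V - {r}) mod k = k - 1 \<longleftrightarrow> k dvd card V"
proof -
  have "card V = Suc (card (V - {r}))" using card_Suc_Diff1[OF assms(1,2)] by simp
  then show ?thesis using assms(3) by (auto simp: mod_Suc dvd_eq_mod_eq_0 split: if_splits)
qed

lemma SE_extend_low_degree:
  assumes "k \<ge> 2" "finite V" "symp E" "irreflp E" "list_assignment k V L" "r \<in> V"
    and "deg V E r \<le> 1" "k dvd card V \<Longrightarrow> {u \<in> V - {r}. E r u} = {}"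
    and "SE_coloring k (V - {r}) E L f"
  obtains g where "SE_coloring k V E L g" "\<forall>v\<in>V - {r}. g v = f v" "root_slack k V g r"
proof -
  have "card (forbidden_colors k (V - {r}) E f r) < k"
  proof (cases "card (V - {r}) mod k = k - 1")
    case True
    then have "deg (V - {r}) E r = 0"
      using assms(8) card_Diff_singleton_mod[OF assms(2,6,1)] unfolding deg_def by (metis card.empty)
    moreover have "card (forbidden_colors k (V - {r}) E f r)
        \<le> card (V - {r}) mod k + deg (V - {r}) E r"
      using card_forbidden_colors_le[OF assms(9)] assms(1,2) by simp
    ultimately show ?thesis
      using True assms(1) by linarith
  next
    case False
    moreover have "deg (V - {r}) E r \<le> 1"
      using deg_mono[OF assms(2), of "V - {r}" E r] assms(7) by simp
    ultimately show ?thesis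
      using card_forbidden_colors_less[OF assms(9)] assms(1,2) by simp
  qed
  then show ?thesis
    using SE_extend_vertex[OF assms(1-6,9)] that by blast
qed

lemma SE_extend_leaf:
  assumes "k \<ge> 2" "finite V" "symp E" "irreflp E" "list_assignment k V L" "r \<in> V"
    and "{u \<in> V - {r}. E r u} \<subseteq> {s}"
    and "SE_coloring k (V - {r}) E L f" "root_slack k (V - {r}) f s"
  obtains g where "SE_coloring k V E L g" "\<forall>v\<in>V - {r}. g v = f v" "root_slack k V g r"
proof -
  have "card (forbidden_colors k (V - {r}) E f r) < k"
  proof (cases "card (V - {r}) mod k = k - 1")
    case True
    then have "card (V - {r}) mod k \<noteq> 0" using assms(1) by simp
    then have "finite (full_colors k (V - {r}) f \<union> {f s})"
      using finite_full_colors[of "V - {r}" k f] assms(1,2) by simp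
    moreover have "forbidden_colors k (V - {r}) E f r \<subseteq> full_colors k (V - {r}) f \<union> {f s}"
      using assms(7) by (auto simp: forbidden_colors_def)
    ultimately show ?thesis
      using assms(9) True by (meson card_mono le_less_trans root_slack_def)
  next
    case False
    moreover have "deg (V - {r}) E r \<le> 1"
      using card_mono[OF _ assms(7)] unfolding deg_def by simp
    ultimately show ?thesis
      using card_forbidden_colors_less[OF assms(8)] assms(1,2) by simp
  qed
  then show ?thesis
    using SE_extend_vertex[OF assms(1-6,8)] that by blast
qed

lemma SE_extend_pendant_edge:
  assumes "k \<ge> 3" "finite V" "symp E" "irreflp E" "list_assignment k V L"
    and "r \<in> V" "s \<in> V" "r \<noteq> s" "{u \<in> V. E r u} = {s}" "deg V E s \<le> 2"
    and "k dvd card (V - {r})" "SE_coloring k (V - {r, s}) E L f"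
  obtains g where "SE_coloring k V E L g" "\<forall>v\<in>V - {r, s}. g v = f v" "root_slack k V g r"
proof -
  have k: "k \<ge> 2" using assms(1) by simp
  have eq: "V - {s} - {r} = V - {r, s}" "V - {r} - {s} = V - {r, s}" by blast+
  have fin: "finite (V - {r, s})" using assms(2) by simp
  \<comment> \<open>Colour r first, while its only neighbour s is uncoloured, then s, once |V - {s}| is a multiple of k.\<close>
  have "card (V - {r, s}) mod k = k - 1"
    using card_Diff_singleton_mod[of "V - {r}" s k] assms(2,7,8,11) k eq(2) by simp
  moreover have "{u \<in> V - {r, s}. E r u} = {}"
    using assms(9) by blast
  then have "deg (V - {r, s}) E r = 0"
    unfolding deg_def by (metis card.empty)
  moreover have "card (forbidden_colors k (V - {r, s}) E f r)
      \<le> card (V - {r, s}) mod k + deg (V - {r, s}) E r"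
    using card_forbidden_colors_le[OF assms(12) fin] assms(1) by simp
  ultimately have "card (forbidden_colors k (V - {s} - {r}) E f r) < k"
    using assms(1) unfolding eq by linarith
  moreover have "SE_coloring k (V - {s} - {r}) E L f" unfolding eq by (rule assms(12))
  moreover have "list_assignment k (V - {s}) L" using assms(5) by (rule list_assignment_subset) blast
  moreover have "finite (V - {s})" "r \<in> V - {s}" using assms(2,6,8) by auto
  ultimately obtain g1 where g1: "SE_coloring k (V - {s}) E L g1" "\<forall>v\<in>V - {r, s}. g1 v = f v"
    using SE_extend_vertex[OF k _ assms(3,4), of "V - {s}" L r f] unfolding eq by blast
  have "card (V - {s}) = card (V - {r})"
    using assms(6,7) by (simp add: card_Diff_singleton)
  then have "card (V - {s}) mod k = 0"
    using assms(11) by simp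
  moreover have "deg (V - {s}) E s \<le> deg V E s"
    using assms(2) by (rule deg_mono) blast
  moreover have "card (forbidden_colors k (V - {s}) E g1 s)
      \<le> card (V - {s}) mod k + deg (V - {s}) E s"
    using card_forbidden_colors_le[OF g1(1)] assms(1,2) by simp
  ultimately have "card (forbidden_colors k (V - {s}) E g1 s) < k"
    using assms(1,10) by linarith
  then obtain g where g: "SE_coloring k V E L g" "\<forall>v\<in>V - {s}. g v = g1 v"
    using SE_extend_vertex[OF k assms(2-5,7) g1(1)] by auto
  have "card V = Suc (card (V - {s}))" using card_Suc_Diff1[OF assms(2,7)] by simp
  then have "card V mod k = 1" using \<open>card (V - {s}) mod k = 0\<close> assms(1) by (simp add: mod_Suc)
  then have "root_slack k V g r" using assms(1) by (simp add: root_slack_def)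
  then show ?thesis using that g g1(2) by auto
qed

lemma SE_extend_bug:
  assumes "k \<ge> 3" "finite V" "symp E" "irreflp E" "list_assignment k V L"
    and "bug V E S r" "deg V E r \<le> 1"
    and "card S \<ge> 2 \<or> \<not> (\<exists>u\<in>S. \<exists>w\<in>V - S. E u w) \<or> \<not> k dvd card V"
    and "SE_coloring k (V - S) E L f"
  shows "\<exists>g. SE_coloring k V E L g \<and> (\<forall>v\<in>V - S. g v = f v) \<and> root_slack k V g r"
  using assms(2,5-9)
proof (induction "card S" arbitrary: V S r f rule: less_induct)
  case less
  note fin = less.prems(1) and la = less.prems(2) and bug = less.prems(3)
    and deg_r = less.prems(4) and cond = less.prems(5) and SE = less.prems(6)
  have k: "k \<ge> 2" using assms(1) by simp
  have "r \<in> S" "S \<subseteq> V" using bug by (auto simp: bug_def)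
  then have r: "r \<in> V" and finS: "finite S" using fin finite_subset by auto
  show ?case
  proof (cases "card S \<ge> 2")
    case False
    then have S: "S = {r}"
      using \<open>r \<in> S\<close> card_le_Suc0_iff_eq[OF finS] by auto
    then obtain g where "SE_coloring k V E L g" "\<forall>v\<in>V - {r}. g v = f v" "root_slack k V g r"
      using SE_extend_low_degree[OF k fin assms(3,4) la r deg_r, of f] cond False SE by auto
    then show ?thesis using S by auto
  next
    case True
    then obtain s where s: "s \<in> S" "s \<noteq> r" "{u \<in> V. E r u} = {s}" "deg V E s \<le> 2"
      and bug': "bug (V - {r}) E (S - {r}) s" and deg_s: "deg (V - {r}) E s \<le> 1"
      using bug_Diff_leaf_root[OF fin assms(3,4) bug deg_r] by blast
    have diff: "V - {r} - (S - {r}) = V - S" using \<open>r \<in> S\<close> by blast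
    show ?thesis
    proof (cases "card (S - {r}) \<ge> 2 \<or> \<not> (\<exists>u\<in>S - {r}. \<exists>w\<in>V - {r} - (S - {r}). E u w)
        \<or> \<not> k dvd card (V - {r})")
      case True
      have "card (S - {r}) < card S" using finS \<open>r \<in> S\<close> by (rule card_Diff1_less)
      moreover have "finite (V - {r})" using fin by simp
      moreover have "list_assignment k (V - {r}) L" using la by (rule list_assignment_subset) blast
      moreover have "SE_coloring k (V - {r} - (S - {r})) E L f" using SE diff by simp
      ultimately obtain g' where g': "SE_coloring k (V - {r}) E L g'" "\<forall>v\<in>V - S. g' v = f v"
        "root_slack k (V - {r}) g' s"
        using less.hyps[OF _ _ _ bug' deg_s True] unfolding diff by blast
      have "{u \<in> V - {r}. E r u} \<subseteq> {s}" using s(3) by blast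
      then obtain g where g: "SE_coloring k V E L g" "\<forall>v\<in>V - {r}. g v = g' v"
        "root_slack k V g r"
        using SE_extend_leaf[OF k fin assms(3,4) la r _ g'(1,3)] by blast
      have "\<forall>v\<in>V - S. g v = f v"
      proof
        fix v assume "v \<in> V - S"
        then have "v \<in> V - {r}" using \<open>r \<in> S\<close> by blast
        then show "g v = f v" using g(2) g'(2) \<open>v \<in> V - S\<close> by simp
      qed
      then show ?thesis using g(1,3) by blast
    next
      case False
      then have "k dvd card (V - {r})" and "card (S - {r}) \<le> 1" by auto
      then have "S = {r, s}"
        using s(1,2) \<open>r \<in> S\<close> card_le_Suc0_iff_eq[of "S - {r}"] finS by auto
      moreover have "s \<in> V" using s(1) \<open>S \<subseteq> V\<close> by blast
      ultimately obtain g where "SE_coloring k V E L g" "\<forall>v\<in>V - S. g v = f v" "root_slack k V g r"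
        using SE_extend_pendant_edge[OF assms(1) fin assms(3,4) la r _ _ s(3,4)]
          \<open>k dvd card (V - {r})\<close> s(2) SE by metis
      then show ?thesis by blast
    qed
  qed
qed

theorem corollary4p4:
  fixes V :: "'a set" and E :: "'a \<Rightarrow> 'a \<Rightarrow> bool" and L :: "'a \<Rightarrow> 'c set"
    and k :: nat and S :: "'a set" and r :: 'a
  assumes "k \<ge> 3"
    and "graph V E"
    and "list_assignment k V L"
    and "bug V E S r"
    and "deg V E r \<le> 1"
    and "card S \<ge> 2 \<or> \<not> (\<exists>u\<in>S. \<exists>w\<in>V - S. E u w) \<or> \<not> (k dvd card V)"
  shows "safe k V E L S"
proof -
  have "finite V" "symp E" "irreflp E"
    using assms(2) by (auto simp: graph_def symp_def irreflp_def)
  then show ?thesis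
    unfolding safe_def using SE_extend_bug[OF assms(1) _ _ _ assms(3-6)] by blast
qed

end
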